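(* Let $m\ge1$ and work in $\Lambda^{\pm}_m=\mathbb Z[x_1^{\pm1},\dots,x_m^{\pm1}]^{S_m}$. (1) For every sequence of integers $\lambda=(\lambda_1,\dots,\lambda_m)$, $E_\lambda(x_1,\dots,x_m)=\det\big(H_{\lambda_i-i+j}\big)_{1\le i,j\le m}$. (2) For every sequence of integers $\lambda_1,\dots,\lambda_{m+1}$, $\det\big(H_{\lambda_i-i+j}\big)_{1\le i,j\le m+1}=0$ in $\Lambda^{\pm}_m$.
   Context: For a sequence of integers $\lambda=(\lambda_1,\dots,\lambda_m)$, $E_\lambda$ is defined by $E_\lambda(x)\prod_{i<j}(x_i-x_j)=\sum_{\sigma\in S_m}\mathrm{sgn}(\sigma)\sigma(x_1^{\lambda_1+m-1}x_2^{\lambda_2+m-2}\cdots x_m^{\lambda_m})$, and $H_k=E_{(k,0,\dots,0)}$ for $k\in\mathbb Z$. *)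

theory Defs
  imports "HOL-Library.Poly_Mapping" "HOL-Combinatorics.Permutations" "Jordan_Normal_Form.Determinant"
begin

text \<open>Laurent polynomials over Z in the variables x_0, x_1, ... : finitely supported
  functions from integer exponent vectors (finitely supported nat => int) to int,
  with the convolution product of Poly_Mapping. The variable x_(i+1) of the paper is
  index i here; in m variables only the indices 0..m-1 occur.\<close>

type_synonym laurent = "(nat \<Rightarrow>\<^sub>0 int) \<Rightarrow>\<^sub>0 int"

definition lmonom :: "(nat \<Rightarrow>\<^sub>0 int) \<Rightarrow> laurent" where
  "lmonom e = Poly_Mapping.single e 1"

definition lvar :: "nat \<Rightarrow> laurent" where
  "lvar i = lmonom (Poly_Mapping.single i 1)"

definition alternant :: "nat \<Rightarrow> (nat \<Rightarrow> int) \<Rightarrow> laurent" where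
  "alternant m a = (\<Sum>\<sigma> | \<sigma> permutes {..<m}.
      of_int (sign \<sigma>) * lmonom (\<Sum>i<m. Poly_Mapping.single (\<sigma> i) (a i)))"

definition vandermonde :: "nat \<Rightarrow> laurent" where
  "vandermonde m = (\<Prod>i<m. \<Prod>j\<in>{i<..<m}. lvar i - lvar j)"

definition E :: "nat \<Rightarrow> int list \<Rightarrow> laurent" where
  "E m lam = (THE p. p * vandermonde m =
      alternant m (\<lambda>i. lam ! i + int (m - 1 - i)))"

definition H :: "nat \<Rightarrow> int \<Rightarrow> laurent" where
  "H m k = E m (k # replicate (m - 1) 0)"

text \<open>The matrix (H_(lambda_i - i + j))_(i,j) of size n = length lam (0-based indices;
  the shift cancels in lambda_i - i + j).\<close>
definition JT_matrix :: "nat \<Rightarrow> int list \<Rightarrow> laurent mat" where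
  "JT_matrix m lam = mat (length lam) (length lam)
      (\<lambda>(i, j). H m (lam ! i - int i + int j))"

end

theory Submission
  imports Defs "HOL-Computational_Algebra.Polynomial"
begin

text \<open>Let \<open>P(t) = \<Prod>\<^sub>j (t - x\<^sub>j)\<close>. Its constant term is a unit of the Laurent ring, so for
  every integer \<open>a\<close> the power \<open>t^a\<close> agrees at \<open>x\<^sub>1, \<dots>, x\<^sub>m\<close> with a unique polynomial \<open>R_a\<close>
  of degree \<open>< m\<close>. The alternant matrix \<open>(x\<^sub>j^a\<^sub>i)\<close> is then the matrix of coefficients of
  the \<open>R_a\<^sub>i\<close> times the Vandermonde matrix, so \<open>E\<^sub>\<lambda>\<close> is the determinant of that coefficient
  matrix; in particular \<open>H\<^sub>k\<close> is the coefficient of \<open>t^(m-1)\<close> in \<open>R_(k+m-1)\<close>. The identity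
  \<open>R_(c+j) = \<Sum>\<^sub>l [t^l]R_c \<cdot> R_(l+j)\<close> factors the Jacobi-Trudi matrix of any size \<open>n \<ge> m\<close>
  as an \<open>n \<times> n\<close> matrix supported on its first \<open>m\<close> columns times a matrix whose leading
  \<open>m \<times> m\<close> block is unitriangular. For \<open>n = m\<close> this gives (1); for \<open>n = m + 1\<close> the first
  factor has a zero column, which gives (2).\<close>

lemma det_mat_upper_triangular:
  fixes f :: "nat \<times> nat \<Rightarrow> 'a :: comm_ring_1"
  assumes "\<And>i j. j < i \<Longrightarrow> i < n \<Longrightarrow> f (i, j) = 0"
  shows "det (mat n n f) = (\<Prod>i<n. f (i, i))"
proof -
  have "det (mat n n f) = prod_list (diag_mat (mat n n f))"
    by (rule det_upper_triangular) (auto simp: upper_triangular_def assms)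
  also have "\<dots> = prod_list (map (\<lambda>i. f (i, i)) [0..<n])"
    unfolding diag_mat_def by (intro arg_cong[where f = prod_list] map_cong) auto
  also have "\<dots> = (\<Prod>i<n. f (i, i))"
    by (simp add: prod.distinct_set_conv_list[symmetric] atLeast_upt)
  finally show ?thesis .
qed

lemma det_mat_zero_col:
  fixes f :: "nat \<times> nat \<Rightarrow> 'a :: comm_ring_1"
  assumes "k < n" "\<And>i. i < n \<Longrightarrow> f (i, k) = 0"
  shows "det (mat n n f) = 0"
proof -
  have "det (mat n n f) = (\<Sum>i<n. mat n n f $$ (i, k) * cofactor (mat n n f) i k)"
    by (rule laplace_expansion_column) (auto simp: assms(1))
  also have "\<dots> = 0"
    by (intro sum.neutral) (auto simp: assms)
  finally show ?thesis .
qed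

lemma vandermonde_row_reduction:
  fixes y :: "nat \<Rightarrow> 'a :: comm_ring_1"
  shows "mat (Suc n) (Suc n) (\<lambda>(i, k). if k = i then 1 else if k = Suc i then - c else 0)
           * mat (Suc n) (Suc n) (\<lambda>(i, j). y j ^ (n - i))
         = mat (Suc n) (Suc n) (\<lambda>(i, j). if i < n then y j ^ (n - 1 - i) * (y j - c) else 1)"
    (is "?L * ?M = ?M'")
proof (rule eq_matI)
  fix i j assume "i < dim_row ?M'" "j < dim_col ?M'"
  then have i: "i < Suc n" and j: "j < Suc n" by auto
  have "(?L * ?M) $$ (i, j) = (\<Sum>k<Suc n. ?L $$ (i, k) * ?M $$ (k, j))"
    using i j by (simp add: scalar_prod_def lessThan_atLeast0)
  also have "\<dots> = ?M' $$ (i, j)"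
  proof (cases "i < n")
    case True
    then obtain t where t: "n - i = Suc t" "n - Suc i = t" "n - 1 - i = t"
      by (metis Suc_diff_Suc diff_Suc_eq_diff_pred)
    have "(\<Sum>k<Suc n. ?L $$ (i, k) * ?M $$ (k, j))
        = (\<Sum>k<Suc n. (if k = i then y j ^ (n - i) else 0)
                    + (if k = Suc i then - c * y j ^ (n - Suc i) else 0))"
      using True j by (intro sum.cong) auto
    also have "\<dots> = y j ^ (n - 1 - i) * (y j - c)"
      using True by (simp add: sum.distrib t algebra_simps)
    finally show ?thesis using True i j by simp
  next
    case False
    then have "i = n" using i by auto
    have "(\<Sum>k<Suc n. ?L $$ (i, k) * ?M $$ (k, j)) = (\<Sum>k<Suc n. if k = n then 1 else 0)"
      using \<open>i = n\<close> j by (intro sum.cong) auto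
    then show ?thesis using \<open>i = n\<close> j by simp
  qed
  finally show "(?L * ?M) $$ (i, j) = ?M' $$ (i, j)" .
qed auto

lemma det_vandermonde:
  fixes y :: "nat \<Rightarrow> 'a :: comm_ring_1"
  shows "det (mat n n (\<lambda>(i, j). y j ^ (n - 1 - i))) = (\<Prod>i<n. \<Prod>j\<in>{i<..<n}. y i - y j)"
proof (induction n)
  case 0
  then show ?case by (simp add: det_def)
next
  case (Suc n)
  define L :: "'a mat" where
    "L = mat (Suc n) (Suc n) (\<lambda>(i, k). if k = i then 1 else if k = Suc i then - y n else 0)"
  define M where "M = mat (Suc n) (Suc n) (\<lambda>(i, j). y j ^ (n - i))"
  define M' where
    "M' = mat (Suc n) (Suc n) (\<lambda>(i, j). if i < n then y j ^ (n - 1 - i) * (y j - y n) else 1)"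
  define V where "V = mat n n (\<lambda>(i, j). y j ^ (n - 1 - i))"
  define D where "D = mat n n (\<lambda>(i, j). if i = j then y j - y n else 0)"
  have "det L = 1"
    unfolding L_def by (subst det_mat_upper_triangular) auto
  then have "det M = det M'"
    using det_mult[of L "Suc n" M] vandermonde_row_reduction[of n "y n" y]
    by (simp add: L_def M_def M'_def)
  also have "\<dots> = (\<Sum>i<Suc n. M' $$ (i, n) * cofactor M' i n)"
    by (rule laplace_expansion_column) (auto simp: M'_def)
  \<comment> \<open>the last column of \<open>M'\<close> is \<open>(0, \<dots>, 0, 1)\<close>\<close>
  also have "\<dots> = (\<Sum>i<Suc n. if i = n then cofactor M' n n else 0)"
    by (intro sum.cong) (auto simp: M'_def)
  also have "\<dots> = det (mat_delete M' n n)"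
    by (simp add: cofactor_def)
  also have "mat_delete M' n n = V * D"
  proof (rule eq_matI)
    fix i j assume "i < dim_row (V * D)" "j < dim_col (V * D)"
    then have "i < n" "j < n" by (auto simp: V_def D_def)
    then show "mat_delete M' n n $$ (i, j) = (V * D) $$ (i, j)"
      by (simp add: mat_delete_def M'_def V_def D_def scalar_prod_def if_distrib cong: if_cong)
  qed (auto simp: mat_delete_def M'_def V_def D_def)
  also have "det (V * D) = (\<Prod>i<n. \<Prod>j\<in>{i<..<n}. y i - y j) * (\<Prod>j<n. y j - y n)"
    using Suc.IH by (subst det_mult[of _ n]) (auto simp: V_def D_def det_mat_upper_triangular)
  also have "\<dots> = (\<Prod>i<Suc n. \<Prod>j\<in>{i<..<Suc n}. y i - y j)"
  proof -
    have "{i<..<Suc n} = insert n {i<..<n}" if "i < n" for i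
      using that by auto
    then have "(\<Prod>i<n. \<Prod>j\<in>{i<..<Suc n}. y i - y j)
        = (\<Prod>i<n. (y i - y n) * (\<Prod>j\<in>{i<..<n}. y i - y j))"
      by (intro prod.cong) auto
    moreover have "{n<..<Suc n} = {}" by auto
    ultimately show ?thesis
      by (simp add: prod.distrib mult.commute)
  qed
  finally show ?case by (simp add: M_def)
qed

lemma poly_eq_sum_lessThan:
  fixes p :: "'a :: comm_semiring_1 poly"
  assumes "degree p < m"
  shows "poly p x = (\<Sum>l<m. coeff p l * x ^ l)"
proof -
  have "poly p x = (\<Sum>l\<le>degree p. coeff p l * x ^ l)" by (simp add: poly_altdef)
  also have "\<dots> = (\<Sum>l<m. coeff p l * x ^ l)"
    by (rule sum.mono_neutral_left) (use assms in \<open>auto simp: coeff_eq_0\<close>)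
  finally show ?thesis .
qed

lemma poly_eq_0_if_vanishes_at_distinct_points:
  fixes D :: "'a :: idom poly"
  assumes "degree D < m" "inj_on y {..<m}" "\<And>j. j < m \<Longrightarrow> poly D (y j) = 0"
  shows "D = 0"
proof (rule ccontr)
  assume D: "D \<noteq> 0"
  have "y ` {..<m} \<subseteq> {x. poly D x = 0}" using assms(3) by auto
  then have "card (y ` {..<m}) \<le> card {x. poly D x = 0}"
    by (rule card_mono[OF poly_roots_finite[OF D]])
  also have "\<dots> \<le> degree D" by (rule card_poly_roots_bound[OF D])
  finally show False using assms(1,2) by (simp add: card_image)
qed

definition lpow :: "nat \<Rightarrow> int \<Rightarrow> laurent" where
  "lpow j a = lmonom (Poly_Mapping.single j a)"

lemma lmonom_add: "lmonom (e + f) = lmonom e * lmonom f"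
  by (simp add: lmonom_def mult_single)

lemma lmonom_zero: "lmonom 0 = 1"
  by (simp add: lmonom_def)

lemma lmonom_sum: "lmonom (\<Sum>i\<in>A. f i) = (\<Prod>i\<in>A. lmonom (f i))"
  by (induction A rule: infinite_finite_induct) (auto simp: lmonom_zero lmonom_add)

lemma lpow_add: "lpow j (a + b) = lpow j a * lpow j b"
  by (simp add: lpow_def single_add lmonom_add)

lemma lpow_zero: "lpow j 0 = 1"
  by (simp add: lpow_def lmonom_zero)

lemma lpow_of_nat: "lpow j (int n) = lvar j ^ n"
  by (induction n) (auto simp: lpow_zero lpow_add lvar_def lpow_def[symmetric])

lemma lpow_neg_of_nat: "lpow j (- int n) = lpow j (-1) ^ n"
proof (induction n)
  case 0
  then show ?case by (simp add: lpow_zero)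
next
  case (Suc n)
  have "lpow j (- int (Suc n)) = lpow j (-1) * lpow j (- int n)"
    by (simp add: lpow_add[symmetric])
  then show ?case using Suc by simp
qed

lemma lvar_mult_lpow_minus_one: "lvar j * lpow j (-1) = 1"
  using lpow_add[of j 1 "-1"] lpow_of_nat[of j 1] by (simp add: lpow_zero)

lemma inj_lvar: "inj lvar"
  unfolding lvar_def lmonom_def
  by (rule injI) (metis inj_single injD lookup_single_eq lookup_single_not_eq zero_neq_one)

lemma lvar_nonzero: "lvar i \<noteq> 0"
  unfolding lvar_def lmonom_def by (metis lookup_single_eq lookup_zero zero_neq_one)

lemma vandermonde_nonzero: "vandermonde m \<noteq> 0"
proof -
  have "lvar i - lvar j \<noteq> 0" if "i < j" for i j
    using that inj_lvar by (auto dest: injD)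
  then show ?thesis unfolding vandermonde_def by (auto simp: prod_zero_iff)
qed

lemma alternant_eq_det: "alternant m a = det (mat m m (\<lambda>(i, j). lpow j (a i)))"
proof -
  have "alternant m a = (\<Sum>p | p permutes {0..<m}.
      of_int (sign p) * (\<Prod>i = 0..<m. mat m m (\<lambda>(i, j). lpow j (a i)) $$ (i, p i)))"
    unfolding alternant_def
    by (intro sum.cong) (auto simp: atLeast0LessThan lmonom_sum lpow_def permutes_def)
  then show ?thesis by (simp add: det_def)
qed

definition vanishing_poly :: "nat \<Rightarrow> laurent poly" where
  "vanishing_poly m = (\<Prod>i<m. [:- lvar i, 1:])"

lemma poly_vanishing_poly_lvar: "j < m \<Longrightarrow> poly (vanishing_poly m) (lvar j) = 0"
  by (auto simp: vanishing_poly_def poly_prod)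

lemma lead_coeff_vanishing_poly: "lead_coeff (vanishing_poly m) = 1"
  by (simp add: vanishing_poly_def lead_coeff_prod)

lemma degree_vanishing_poly: "degree (vanishing_poly m) = m"
  by (simp add: vanishing_poly_def degree_prod_sum_eq)

text \<open>Writing the vanishing polynomial as \<open>c + t Q(t)\<close>, its constant term \<open>c\<close> is a unit and
  \<open>-c\<^sup>-\<^sup>1 Q(t)\<close> takes the value \<open>x\<^sub>j\<^sup>-\<^sup>1\<close> at every \<open>x\<^sub>j\<close>.\<close>
lemma exists_poly_eval_lpow_minus_one: "\<exists>G. \<forall>j<m. poly G (lvar j) = lpow j (-1)"
proof -
  obtain c Q where PQ: "vanishing_poly m = pCons c Q" by (cases "vanishing_poly m") auto
  have "c = poly (vanishing_poly m) 0" using PQ by simp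
  then have c: "c = (\<Prod>i<m. - lvar i)" by (simp add: vanishing_poly_def poly_prod)
  define u where "u = (\<Prod>i<m. - lpow i (-1))"
  have "c * u = 1"
    unfolding c u_def prod.distrib[symmetric] by (simp add: lvar_mult_lpow_minus_one)
  have "poly (Polynomial.smult (- u) Q) (lvar j) = lpow j (-1)" if "j < m" for j
  proof -
    have "lvar j * poly Q (lvar j) = - c"
      using poly_vanishing_poly_lvar[OF that] PQ by (simp add: add_eq_0_iff)
    then have "lvar j * poly (Polynomial.smult (- u) Q) (lvar j) = lvar j * lpow j (-1)"
      using \<open>c * u = 1\<close> by (simp add: lvar_mult_lpow_minus_one algebra_simps)
    then show ?thesis using mult_left_cancel[OF lvar_nonzero] by blast
  qed
  then show ?thesis by blast
qed

lemma exists_poly_eval_lpow: "\<exists>F. \<forall>j<m. poly F (lvar j) = lpow j a"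
proof (cases "a \<ge> 0")
  case True
  then have "\<forall>j<m. poly (monom 1 (nat a)) (lvar j) = lpow j a"
    by (simp add: poly_monom lpow_of_nat[symmetric])
  then show ?thesis by blast
next
  case False
  obtain G where G: "\<forall>j<m. poly G (lvar j) = lpow j (-1)"
    using exists_poly_eval_lpow_minus_one by blast
  have "a = - int (nat (- a))" using False by simp
  then have "\<forall>j<m. poly (G ^ nat (- a)) (lvar j) = lpow j a"
    using G by (metis poly_power lpow_neg_of_nat)
  then show ?thesis by blast
qed

lemma exists_lpow_interpolant:
  assumes "m \<ge> 1"
  shows "\<exists>R. degree R < m \<and> (\<forall>j<m. poly R (lvar j) = lpow j a)"
proof -
  obtain F where F: "\<forall>j<m. poly F (lvar j) = lpow j a" using exists_poly_eval_lpow by blast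
  obtain q r where qr: "pseudo_divmod F (vanishing_poly m) = (q, r)" by fastforce
  have nz: "vanishing_poly m \<noteq> 0"
    using lead_coeff_vanishing_poly by (metis leading_coeff_0_iff zero_neq_one)
  have "F = vanishing_poly m * q + r"
    using pseudo_divmod(1)[OF nz qr] by (simp add: lead_coeff_vanishing_poly)
  moreover have "degree r < m"
    using pseudo_divmod(2)[OF nz qr] assms degree_vanishing_poly by auto
  ultimately show ?thesis using F poly_vanishing_poly_lvar by (intro exI[of _ r]) auto
qed

definition lpow_interp :: "nat \<Rightarrow> int \<Rightarrow> laurent poly" where
  "lpow_interp m a = (SOME R. degree R < m \<and> (\<forall>j<m. poly R (lvar j) = lpow j a))"

lemma
  assumes "m \<ge> 1"
  shows degree_lpow_interp: "degree (lpow_interp m a) < m"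
    and poly_lpow_interp: "j < m \<Longrightarrow> poly (lpow_interp m a) (lvar j) = lpow j a"
  using someI_ex[OF exists_lpow_interpolant[OF assms, of a]]
  unfolding lpow_interp_def by auto

lemma lpow_interp_unique:
  assumes "m \<ge> 1" "degree R < m" "\<And>j. j < m \<Longrightarrow> poly R (lvar j) = lpow j a"
  shows "lpow_interp m a = R"
proof -
  have "degree (lpow_interp m a - R) < m"
    using degree_lpow_interp[OF assms(1), of a] assms(2) degree_diff_le_max[of "lpow_interp m a" R]
    by (meson le_less_trans max_less_iff_conj)
  moreover have "\<And>j. j < m \<Longrightarrow> poly (lpow_interp m a - R) (lvar j) = 0"
    using poly_lpow_interp[OF assms(1)] assms(3) by simp
  ultimately have "lpow_interp m a - R = 0"
    using inj_lvar by (intro poly_eq_0_if_vanishes_at_distinct_points) (auto intro: inj_on_subset)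
  then show ?thesis by simp
qed

lemma coeff_lpow_interp_of_nat:
  assumes "n < m"
  shows "coeff (lpow_interp m (int n)) k = (if k = n then 1 else 0)"
proof -
  have "m \<ge> 1" using assms by simp
  then have "lpow_interp m (int n) = monom 1 n"
    by (rule lpow_interp_unique) (auto simp: degree_monom_eq assms poly_monom lpow_of_nat)
  then show ?thesis by (simp add: coeff_monom)
qed

lemma coeff_lpow_interp_nonneg:
  assumes "0 \<le> a" "a < int m"
  shows "coeff (lpow_interp m a) k = (if int k = a then 1 else 0)"
  using assms coeff_lpow_interp_of_nat[of "nat a" m k] by auto

text \<open>Both sides have degree \<open>< m\<close> and take the value \<open>x\<^sub>j^a \<cdot> x\<^sub>j^b = \<Sum>\<^sub>l [t^l]R_a \<cdot> x\<^sub>j^(l+b)\<close>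
  at every \<open>x\<^sub>j\<close>.\<close>
lemma lpow_interp_add:
  assumes m: "m \<ge> 1"
  shows "lpow_interp m (a + int b)
       = (\<Sum>l<m. Polynomial.smult (coeff (lpow_interp m a) l) (lpow_interp m (int l + int b)))"
    (is "_ = ?S")
proof (rule lpow_interp_unique[OF m])
  have "degree (Polynomial.smult (coeff (lpow_interp m a) l) (lpow_interp m (int l + int b))) \<le> m - 1"
    for l
    using degree_lpow_interp[OF m, of "int l + int b"]
      degree_smult_le[of "coeff (lpow_interp m a) l" "lpow_interp m (int l + int b)"]
    by linarith
  then have "degree ?S \<le> m - 1"
    by (intro degree_sum_le) auto
  then show "degree ?S < m"
    using m by linarith
next
  fix j assume j: "j < m"
  have "poly ?S (lvar j) = (\<Sum>l<m. coeff (lpow_interp m a) l * lvar j ^ l) * lpow j (int b)"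
    using poly_lpow_interp[OF m j]
    by (simp add: poly_sum lpow_add lpow_of_nat sum_distrib_left sum_distrib_right mult_ac)
  also have "\<dots> = lpow j (a + int b)"
    using poly_eq_sum_lessThan[OF degree_lpow_interp[OF m]] poly_lpow_interp[OF m j]
    by (simp add: lpow_add)
  finally show "poly ?S (lvar j) = lpow j (a + int b)" .
qed

definition interp_coeff_mat :: "nat \<Rightarrow> nat \<Rightarrow> (nat \<Rightarrow> int) \<Rightarrow> laurent mat" where
  "interp_coeff_mat n m a =
     mat n n (\<lambda>(i, l). if l < m then coeff (lpow_interp m (a i)) (m - 1 - l) else 0)"

lemma alternant_mat_factor:
  assumes m: "m \<ge> 1"
  shows "mat m m (\<lambda>(i, j). lpow j (a i))
       = interp_coeff_mat m m a * mat m m (\<lambda>(i, j). lvar j ^ (m - 1 - i))"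
    (is "?X = ?C * ?V")
proof (rule eq_matI)
  fix i j assume "i < dim_row (?C * ?V)" "j < dim_col (?C * ?V)"
  then have i: "i < m" and j: "j < m" by (auto simp: interp_coeff_mat_def)
  have "(?C * ?V) $$ (i, j)
      = (\<Sum>l<m. coeff (lpow_interp m (a i)) (m - Suc l) * lvar j ^ (m - Suc l))"
    using i j by (simp add: interp_coeff_mat_def scalar_prod_def lessThan_atLeast0)
  also have "\<dots> = (\<Sum>l<m. coeff (lpow_interp m (a i)) l * lvar j ^ l)"
    by (rule sum.nat_diff_reindex)
  also have "\<dots> = lpow j (a i)"
    using poly_eq_sum_lessThan[OF degree_lpow_interp[OF m]] poly_lpow_interp[OF m j] by simp
  finally show "?X $$ (i, j) = (?C * ?V) $$ (i, j)"
    using i j by simp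
qed (auto simp: interp_coeff_mat_def)

lemma alternant_eq_det_interp_coeff_mat:
  assumes "m \<ge> 1"
  shows "alternant m a = det (interp_coeff_mat m m a) * vandermonde m"
proof -
  have "alternant m a = det (interp_coeff_mat m m a) * det (mat m m (\<lambda>(i, j). lvar j ^ (m - 1 - i)))"
    unfolding alternant_eq_det alternant_mat_factor[OF assms]
    by (rule det_mult) (auto simp: interp_coeff_mat_def)
  then show ?thesis
    by (simp only: det_vandermonde vandermonde_def)
qed

lemma E_eq_det_interp_coeff_mat:
  assumes "m \<ge> 1" "\<And>i. i < m \<Longrightarrow> a i = lam ! i + int (m - 1 - i)"
  shows "E m lam = det (interp_coeff_mat m m a)"
proof -
  have "alternant m (\<lambda>i. lam ! i + int (m - 1 - i)) = alternant m a"
    unfolding alternant_eq_det by (intro arg_cong[where f = det] eq_matI) (auto simp: assms(2))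
  then have alt: "alternant m (\<lambda>i. lam ! i + int (m - 1 - i))
      = det (interp_coeff_mat m m a) * vandermonde m"
    by (simp add: alternant_eq_det_interp_coeff_mat[OF assms(1)])
  show ?thesis
    unfolding E_def
  proof (rule the_equality)
    fix p assume "p * vandermonde m = alternant m (\<lambda>i. lam ! i + int (m - 1 - i))"
    then show "p = det (interp_coeff_mat m m a)"
      using alt vandermonde_nonzero by (metis mult_right_cancel)
  qed (use alt in simp)
qed

lemma H_eq_coeff_lpow_interp:
  assumes "m \<ge> 1"
  shows "H m k = coeff (lpow_interp m (k + int (m - 1))) (m - 1)"
proof -
  define a where "a i = (if i = 0 then k + int (m - 1) else int (m - 1 - i))" for i
  have "H m k = det (interp_coeff_mat m m a)"
    unfolding H_def by (rule E_eq_det_interp_coeff_mat[OF assms]) (auto simp: a_def nth_Cons')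
  also have "\<dots> = (\<Prod>i<m. coeff (lpow_interp m (a i)) (m - 1 - i))"
    unfolding interp_coeff_mat_def
    by (subst det_mat_upper_triangular) (auto simp: a_def coeff_lpow_interp_nonneg)
  also have "\<dots> = coeff (lpow_interp m (a 0)) (m - 1)"
    using assms
    by (cases m) (auto simp: prod.lessThan_Suc_shift a_def coeff_lpow_interp_nonneg
                       simp del: prod.lessThan_Suc)
  finally show ?thesis by (simp add: a_def)
qed

text \<open>By \<open>H_eq_coeff_lpow_interp\<close>, entry \<open>(l, j)\<close> with \<open>l < m\<close> is \<open>H\<^bsub>j - l\<^esub>\<close>.\<close>
definition shift_mat :: "nat \<Rightarrow> nat \<Rightarrow> laurent mat" where
  "shift_mat n m =
     mat n n (\<lambda>(l, j). if l < m then coeff (lpow_interp m (int (m - 1 - l + j))) (m - 1) else 0)"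

lemma det_shift_mat: "det (shift_mat m m) = 1"
  unfolding shift_mat_def
  by (subst det_mat_upper_triangular) (auto simp: coeff_lpow_interp_nonneg)

lemma JT_matrix_factor:
  assumes m: "m \<ge> 1" and n: "m \<le> length lam"
  shows "JT_matrix m lam
       = interp_coeff_mat (length lam) m (\<lambda>i. lam ! i - int i + int (m - 1)) * shift_mat (length lam) m"
    (is "_ = ?C * ?B")
proof (rule eq_matI)
  fix i j assume "i < dim_row (?C * ?B)" "j < dim_col (?C * ?B)"
  then have i: "i < length lam" and j: "j < length lam"
    by (auto simp: interp_coeff_mat_def shift_mat_def)
  define c where "c = lam ! i - int i + int (m - 1)"
  have "JT_matrix m lam $$ (i, j) = H m (lam ! i - int i + int j)"
    using i j by (simp add: JT_matrix_def)
  also have "\<dots> = coeff (lpow_interp m (c + int j)) (m - 1)"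
    unfolding H_eq_coeff_lpow_interp[OF m] c_def by (simp only: ac_simps)
  also have "\<dots> = (\<Sum>l<m. coeff (lpow_interp m c) l * coeff (lpow_interp m (int l + int j)) (m - 1))"
    by (subst lpow_interp_add[OF m]) (simp add: coeff_sum)
  also have "\<dots> = (\<Sum>l<m. coeff (lpow_interp m c) (m - Suc l)
                        * coeff (lpow_interp m (int (m - Suc l) + int j)) (m - 1))"
    by (rule sum.nat_diff_reindex[symmetric])
  also have "\<dots> = (\<Sum>l<m. ?C $$ (i, l) * ?B $$ (l, j))"
    using n i j by (intro sum.cong) (auto simp: interp_coeff_mat_def shift_mat_def c_def diff_add_eq)
  also have "\<dots> = (\<Sum>l\<in>{0..<length lam}. ?C $$ (i, l) * ?B $$ (l, j))"
    using n j by (intro sum.mono_neutral_left) (auto simp: shift_mat_def)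
  also have "\<dots> = (?C * ?B) $$ (i, j)"
    using i j by (simp add: interp_coeff_mat_def shift_mat_def scalar_prod_def)
  finally show "JT_matrix m lam $$ (i, j) = (?C * ?B) $$ (i, j)" .
qed (auto simp: JT_matrix_def interp_coeff_mat_def shift_mat_def)

theorem mainTheorem3:
  fixes m :: nat
  assumes "m \<ge> 1"
  shows "(\<forall>lam :: int list. length lam = m \<longrightarrow> E m lam = det (JT_matrix m lam))
       \<and> (\<forall>lam :: int list. length lam = m + 1 \<longrightarrow> det (JT_matrix m lam) = 0)"
proof (intro conjI allI impI)
  define a where "a lam i = lam ! i - int i + int (m - 1)" for lam :: "int list" and i
  have det_JT: "det (JT_matrix m lam)
      = det (interp_coeff_mat (length lam) m (a lam)) * det (shift_mat (length lam) m)"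
    if "m \<le> length lam" for lam
    unfolding JT_matrix_factor[OF assms that] a_def
    by (rule det_mult) (auto simp: interp_coeff_mat_def shift_mat_def)
  show "E m lam = det (JT_matrix m lam)" if "length lam = m" for lam
    using that det_JT[of lam] E_eq_det_interp_coeff_mat[OF assms, of "a lam" lam]
    by (simp add: det_shift_mat a_def)
  show "det (JT_matrix m lam) = 0" if "length lam = m + 1" for lam
  proof -
    have "det (interp_coeff_mat (m + 1) m (a lam)) = 0"
      unfolding interp_coeff_mat_def by (rule det_mat_zero_col[of m]) auto
    then show ?thesis
      using that det_JT[of lam] by simp
  qed
qed

end
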